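(* Let $A\in\mathbb R^{N\times N}$ be a $Z$-matrix and let $p<1$. Then the equation $Ax=x^{p}$ has a solution $x\in\mathbb R^N$ with $x>0$ if and only if $A$ is a non-singular $M$-matrix.
   Context: Inequalities between vectors/matrices are componentwise; for $x\in(0,\infty)^N$, $x^p:=(x_1^p,\dots,x_N^p)^\top$. A matrix $A\in\mathbb R^{N\times N}$ is a $Z$-matrix if $A_{ij}\le 0$ for all $i\neq j$. A $Z$-matrix $A$ is an $M$-matrix if $A=s\,\mathrm{Id}-B$ for some matrix $B\ge 0$ and some $s\in\mathbb R$ with $s\ge\rho(B)$, where $\rho(B)$ is the spectral radius of $B$; it is a non-singular $M$-matrix if in addition it is invertible. *)

theory Defs
  imports "HOL-Analysis.Analysis"
begin

text \<open>Square real matrices are rendered as real^'n^'n with a finite index type 'n (N = CARD('n)).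
Componentwise order; x^p componentwise via powr.\<close>

definition Z_matrix :: "real^'n^'n \<Rightarrow> bool" where
  "Z_matrix A \<longleftrightarrow> (\<forall>i j. i \<noteq> j \<longrightarrow> A $ i $ j \<le> 0)"

definition cmatrix :: "real^'n^'n \<Rightarrow> complex^'n^'n" where
  "cmatrix B = (\<chi> i j. complex_of_real (B $ i $ j))"

definition spec_rad :: "real^'n^'n::finite \<Rightarrow> real" where
  "spec_rad B = Max {cmod l | l. \<exists>v::complex^'n. v \<noteq> 0 \<and> cmatrix B *v v = l *s v}"

definition M_matrix :: "real^'n^'n::finite \<Rightarrow> bool" where
  "M_matrix A \<longleftrightarrow> Z_matrix A \<and>
     (\<exists>s B. (\<forall>i j. 0 \<le> B $ i $ j) \<and> A = s *\<^sub>R mat 1 - B \<and> s \<ge> spec_rad B)"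

definition nonsingular_M_matrix :: "real^'n^'n::finite \<Rightarrow> bool" where
  "nonsingular_M_matrix A \<longleftrightarrow> M_matrix A \<and> invertible A"

definition vpowr :: "real^'n \<Rightarrow> real \<Rightarrow> real^'n" where
  "vpowr x p = (\<chi> i. (x $ i) powr p)"

end

(*
  Write A = s I - B with B \<ge> 0. A positive solution x gives A x = x powr p > 0, i.e. B x < s x
  componentwise, and comparing an eigenvector of B with x at its largest ratio shows that every
  eigenvalue of B has modulus less than s; so A is a nonsingular M-matrix.

  Conversely, a nonsingular M-matrix A maps some positive vector v to a positive vector: the least
  t for which some positive v satisfies B v < t v lies below s, because at that t the matrix
  t I - B is invertible and, by a maximum-principle argument, has a positive solution of
  (t I - B) u = 1. Since p < 1, small multiples of v are subsolutions and large multiples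
  supersolutions of A x = x powr p, and because A is a Z-matrix the componentwise infimum of
  the supersolutions above the subsolution is a solution.
*)

theory Submission
  imports Defs "Jordan_Normal_Form.Spectral_Radius"
begin

(* Jordan_Normal_Form is used only for the finiteness and non-emptiness of the spectrum; its
   vector indexing notation and its constants mat and vec clash with Finite_Cartesian_Product. *)
no_notation vec_index (infixl "$" 100)
hide_const (open) Matrix.mat Matrix.vec

section \<open>Eigenvalues and spectral radius\<close>

definition eigenvalues :: "'a::comm_ring_1^'n^'n \<Rightarrow> 'a set" where
  "eigenvalues C = {l. \<exists>v. v \<noteq> 0 \<and> C *v v = l *s v}"

definition vec_of_cart :: "(nat \<Rightarrow> 'n) \<Rightarrow> nat \<Rightarrow> 'a^'n \<Rightarrow> 'a vec" where
  "vec_of_cart h n v = Matrix.vec n (\<lambda>i. v $ h i)"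

definition mat_of_cart :: "(nat \<Rightarrow> 'n) \<Rightarrow> nat \<Rightarrow> 'a^'n^'n \<Rightarrow> 'a mat" where
  "mat_of_cart h n C = Matrix.mat n n (\<lambda>(i, j). C $ h i $ h j)"

lemma bij_betw_vec_of_cart:
  assumes h: "bij_betw h {..<n} (UNIV :: 'n set)"
  shows "bij_betw (vec_of_cart h n :: 'a^'n \<Rightarrow> 'a vec) UNIV (carrier_vec n)"
proof (rule bij_betw_byWitness[where f' = "\<lambda>w. \<chi> k. vec_index w (inv_into {..<n} h k)"])
  have k: "k \<in> h ` {..<n}" for k using h unfolding bij_betw_def by simp
  have "h (inv_into {..<n} h k) = k" "inv_into {..<n} h k < n" for k
    using f_inv_into_f[OF k] inv_into_into[OF k] by simp_all
  then show "\<forall>v \<in> UNIV. (\<chi> k. vec_index (vec_of_cart h n v) (inv_into {..<n} h k)) = v"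
    by (simp add: vec_of_cart_def Finite_Cartesian_Product.vec_eq_iff)
  have "inv_into {..<n} h (h i) = i" if "i < n" for i
    using h that unfolding bij_betw_def by (simp add: inv_into_f_f)
  then show "\<forall>w \<in> carrier_vec n. vec_of_cart h n (\<chi> k. vec_index w (inv_into {..<n} h k)) = w"
    by (auto simp: vec_of_cart_def)
qed (auto simp: vec_of_cart_def)

lemma vec_of_cart_zero: "vec_of_cart h n 0 = 0\<^sub>v n"
  by (auto simp: vec_of_cart_def)

lemma vec_of_cart_smult: "vec_of_cart h n (l *s v) = l \<cdot>\<^sub>v vec_of_cart h n v"
  by (auto simp: vec_of_cart_def)

lemma vec_of_cart_mult:
  assumes h: "bij_betw h {..<n} (UNIV :: 'n set)"
  shows "vec_of_cart h n (C *v v) = mat_of_cart h n C *\<^sub>v vec_of_cart h n (v :: 'a::comm_semiring_1^'n)"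
proof (rule eq_vecI)
  fix i assume "i < dim_vec (mat_of_cart h n C *\<^sub>v vec_of_cart h n v)"
  then have "i < n" by (simp add: mat_of_cart_def)
  moreover have "(\<Sum>k\<in>UNIV. C $ h i $ k * v $ k) = (\<Sum>j<n. C $ h i $ h j * v $ h j)"
    using sum.reindex_bij_betw[OF h, of "\<lambda>k. C $ h i $ k * v $ k"] by simp
  ultimately show "vec_index (vec_of_cart h n (C *v v)) i
      = vec_index (mat_of_cart h n C *\<^sub>v vec_of_cart h n v) i"
    by (simp add: vec_of_cart_def mat_of_cart_def matrix_vector_mult_def scalar_prod_def
        lessThan_atLeast0)
qed (simp add: vec_of_cart_def mat_of_cart_def)

lemma eigenvalues_eq_spectrum:
  fixes C :: "'a::comm_ring_1^'n^'n::finite"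
  assumes h: "bij_betw h {..<n} (UNIV :: 'n set)"
  shows "eigenvalues C = spectrum (mat_of_cart h n C)"
proof -
  have bij: "bij_betw (vec_of_cart h n :: 'a^'n \<Rightarrow> 'a vec) UNIV (carrier_vec n)"
    using h by (rule bij_betw_vec_of_cart)
  then have inj: "vec_of_cart h n x = vec_of_cart h n y \<longleftrightarrow> x = y" for x y :: "'a^'n"
    by (simp add: bij_betw_def inj_eq)
  have dim: "dim_row (mat_of_cart h n C) = n" by (simp add: mat_of_cart_def)
  have eigen: "eigenvector (mat_of_cart h n C) (vec_of_cart h n v) l \<longleftrightarrow>
      v \<noteq> 0 \<and> C *v v = l *s v" for v l
    using bij_betwE[OF bij] inj[of v 0] inj[of "C *v v" "l *s v"]
    by (simp add: eigenvector_def dim vec_of_cart_zero vec_of_cart_smult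
        vec_of_cart_mult[OF h, symmetric])
  have eigenvalue_iff: "eigenvalue (mat_of_cart h n C) l \<longleftrightarrow>
      (\<exists>v. eigenvector (mat_of_cart h n C) (vec_of_cart h n v) l)" for l
  proof
    assume "eigenvalue (mat_of_cart h n C) l"
    then obtain w where w: "eigenvector (mat_of_cart h n C) w l" unfolding eigenvalue_def ..
    then have "w \<in> range (vec_of_cart h n)"
      using bij_betw_imp_surj_on[OF bij] by (simp add: eigenvector_def dim)
    with w show "\<exists>v. eigenvector (mat_of_cart h n C) (vec_of_cart h n v) l" by blast
  qed (auto simp: eigenvalue_def)
  show ?thesis
    unfolding eigenvalues_def spectrum_def by (rule Collect_cong) (simp add: eigenvalue_iff eigen)
qed

lemma finite_eigenvalues: "finite (eigenvalues (C :: 'a::field^'n^'n::finite))"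
proof -
  obtain h :: "nat \<Rightarrow> 'n" where "bij_betw h {..<CARD('n)} UNIV"
    using ex_bij_betw_nat_finite[of "UNIV :: 'n set"] by (auto simp: atLeast0LessThan)
  then show ?thesis
    using card_finite_spectrum(1)[OF mat_carrier] by (simp add: eigenvalues_eq_spectrum mat_of_cart_def)
qed

lemma eigenvalues_nonempty: "eigenvalues (C :: complex^'n^'n::finite) \<noteq> {}"
proof -
  obtain h :: "nat \<Rightarrow> 'n" where "bij_betw h {..<CARD('n)} UNIV"
    using ex_bij_betw_nat_finite[of "UNIV :: 'n set"] by (auto simp: atLeast0LessThan)
  then show ?thesis
    using spectrum_non_empty[OF mat_carrier] by (simp add: eigenvalues_eq_spectrum mat_of_cart_def)
qed

lemma spec_rad_eq_Max: "spec_rad B = Max (cmod ` eigenvalues (cmatrix B))"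
  unfolding spec_rad_def eigenvalues_def by (simp add: setcompr_eq_image)

lemma spec_rad_le_iff: "spec_rad B \<le> s \<longleftrightarrow> (\<forall>l \<in> eigenvalues (cmatrix B). cmod l \<le> s)"
  by (simp add: spec_rad_eq_Max finite_eigenvalues eigenvalues_nonempty)

lemma of_real_in_eigenvalues_cmatrix:
  fixes B :: "real^'n^'n"
  assumes "w \<noteq> 0" "B *v w = t *\<^sub>R w"
  shows "complex_of_real t \<in> eigenvalues (cmatrix B)"
proof -
  define wc where "wc = (\<chi> i. complex_of_real (w $ i))"
  have "wc \<noteq> 0"
    using assms(1) by (auto simp: wc_def Finite_Cartesian_Product.vec_eq_iff)
  moreover have "cmatrix B *v wc = complex_of_real t *s wc"
    using assms(2)
    by (auto simp: wc_def cmatrix_def matrix_vector_mult_def Finite_Cartesian_Product.vec_eq_iff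
        simp flip: of_real_mult of_real_sum)
  ultimately show ?thesis unfolding eigenvalues_def by blast
qed

lemma matrix_vector_mult_shift:
  fixes B :: "real^'n^'n"
  shows "(t *\<^sub>R mat 1 - B) *v w = t *\<^sub>R w - B *v w"
  by (simp add: matrix_vector_mult_diff_rdistrib matrix_vector_mul_lid
      flip: scaleR_matrix_vector_assoc)

lemma invertible_shift_iff:
  fixes B :: "real^'n^'n"
  shows "invertible (t *\<^sub>R mat 1 - B) \<longleftrightarrow> (\<forall>w. B *v w = t *\<^sub>R w \<longrightarrow> w = 0)"
  unfolding invertible_left_inverse matrix_left_invertible_ker matrix_vector_mult_shift
  by (simp add: eq_commute[of "B *v _"])

section \<open>Strict subeigenvectors of nonnegative matrices\<close>

lemma finite_UNIV_has_argmax: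
  fixes f :: "'n::finite \<Rightarrow> 'a::linorder"
  obtains k where "\<And>j. f j \<le> f k"
proof -
  have "Max (range f) \<in> range f" by (rule Max_in) simp_all
  then obtain k where "Max (range f) = f k" by (rule rangeE)
  then have "f j \<le> f k" for j using Max_ge[of "range f" "f j"] by simp
  then show thesis by (rule that)
qed

(* For nonnegative B, a strict subeigenvector for t exists exactly when every eigenvalue of B
   has modulus less than t. *)
definition strict_subeigenvector :: "real^'n^'n \<Rightarrow> real \<Rightarrow> real^'n \<Rightarrow> bool" where
  "strict_subeigenvector B t v \<longleftrightarrow> (\<forall>i. 0 < v $ i) \<and> (\<forall>i. (B *v v) $ i < t * v $ i)"

lemma nonneg_matrix_vector_mult_nonneg:
  fixes B :: "real^'n^'n"
  assumes "\<forall>i j. 0 \<le> B $ i $ j" "\<forall>j. 0 \<le> z $ j"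
  shows "0 \<le> (B *v z) $ i"
  unfolding matrix_vector_mult_def using assms by (simp add: sum_nonneg)

lemma strict_subeigenvector_mono:
  assumes "strict_subeigenvector B t v" "t \<le> t'"
  shows "strict_subeigenvector B t' v"
  using assms unfolding strict_subeigenvector_def
  by (meson less_le_trans mult_right_mono less_imp_le)

lemma strict_subeigenvector_decrease:
  assumes "strict_subeigenvector B t v"
  obtains t' where "t' < t" "strict_subeigenvector B t' v"
proof -
  have v: "\<forall>i. 0 < v $ i" "\<forall>i. (B *v v) $ i / v $ i < t"
    using assms unfolding strict_subeigenvector_def by (auto simp: divide_less_eq)
  define t' where "t' = Max (range (\<lambda>i. (B *v v) $ i / v $ i))"
  have "t' < t" unfolding t'_def using v(2) by (simp add: Max_less_iff)
  moreover have "(B *v v) $ i < ((t' + t) / 2) * v $ i" for i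
  proof -
    have "(B *v v) $ i / v $ i \<le> t'" unfolding t'_def by simp
    then have "(B *v v) $ i \<le> t' * v $ i" using v(1) by (simp add: pos_divide_le_eq)
    also have "\<dots> < ((t' + t) / 2) * v $ i"
      using v(1) \<open>t' < t\<close> by (intro mult_strict_right_mono) auto
    finally show ?thesis .
  qed
  ultimately show thesis
    using that[of "(t' + t) / 2"] v(1) unfolding strict_subeigenvector_def by simp
qed

lemma ex_strict_subeigenvector: "\<exists>t v. strict_subeigenvector B t v"
proof (intro exI)
  define t where "t = 1 + (\<Sum>i\<in>UNIV. \<Sum>j\<in>UNIV. \<bar>B $ i $ j\<bar>)"
  have "(B *v 1) $ i < t * 1 $ i" for i
  proof -
    have "(B *v 1) $ i \<le> (\<Sum>j\<in>UNIV. \<bar>B $ i $ j\<bar>)"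
      by (simp add: matrix_vector_mult_def sum_mono)
    also have "\<dots> \<le> (\<Sum>i\<in>UNIV. \<Sum>j\<in>UNIV. \<bar>B $ i $ j\<bar>)"
      by (rule member_le_sum) (auto intro: sum_nonneg)
    finally show ?thesis unfolding t_def by simp
  qed
  then show "strict_subeigenvector B t 1"
    unfolding strict_subeigenvector_def by simp
qed

lemma strict_subeigenvector_pos:
  fixes B :: "real^'n^'n"
  assumes "\<forall>i j. 0 \<le> B $ i $ j" "strict_subeigenvector B t v"
  shows "0 < t"
proof -
  obtain i :: 'n where True by blast
  have v: "\<forall>j. 0 < v $ j" "(B *v v) $ i < t * v $ i"
    using assms(2) unfolding strict_subeigenvector_def by auto
  have "0 \<le> (B *v v) $ i"
    using assms(1) v(1) by (intro nonneg_matrix_vector_mult_nonneg) (auto simp: less_imp_le)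
  then have "0 < t * v $ i" using v(2) by linarith
  with v(1) show ?thesis by (metis zero_less_mult_pos2)
qed

(* Compare the components of an eigenvector v with x at an index k maximising |v k| / x k. *)
lemma cmod_eigenvalue_less:
  fixes B :: "real^'n^'n"
  assumes B_nonneg: "\<forall>i j. 0 \<le> B $ i $ j" and x: "strict_subeigenvector B s x"
    and l: "l \<in> eigenvalues (cmatrix B)"
  shows "cmod l < s"
proof -
  obtain v where "v \<noteq> 0" and v: "cmatrix B *v v = l *s v"
    using l unfolding eigenvalues_def by blast
  have x_pos: "0 < x $ j" and Bx: "(B *v x) $ j < s * x $ j" for j
    using x unfolding strict_subeigenvector_def by auto
  define ratio where "ratio j = cmod (v $ j) / x $ j" for j
  obtain k where ratio_le: "ratio j \<le> ratio k" for j
    using finite_UNIV_has_argmax[of ratio] by blast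
  have v_le: "cmod (v $ j) \<le> ratio k * x $ j" for j
    using ratio_le[of j] x_pos[of j] unfolding ratio_def[of j] by (simp add: pos_divide_le_eq)
  obtain j where "v $ j \<noteq> 0"
    using \<open>v \<noteq> 0\<close> by (metis Finite_Cartesian_Product.vec_eq_iff zero_index)
  then have "0 < ratio j" unfolding ratio_def using x_pos by simp
  then have ratio_pos: "0 < ratio k" using ratio_le[of j] by linarith
  then have vk_pos: "0 < cmod (v $ k)"
    unfolding ratio_def using x_pos by (simp add: zero_less_divide_iff)
  have "l * v $ k = (\<Sum>j\<in>UNIV. complex_of_real (B $ k $ j) * v $ j)"
    using v[symmetric] by (simp add: Finite_Cartesian_Product.vec_eq_iff matrix_vector_mult_def cmatrix_def)
  then have "cmod l * cmod (v $ k) = cmod (\<Sum>j\<in>UNIV. complex_of_real (B $ k $ j) * v $ j)"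
    by (metis norm_mult)
  also have "\<dots> \<le> (\<Sum>j\<in>UNIV. cmod (complex_of_real (B $ k $ j) * v $ j))"
    by (rule norm_sum)
  also have "\<dots> = (\<Sum>j\<in>UNIV. B $ k $ j * cmod (v $ j))"
    using B_nonneg by (simp add: norm_mult)
  also have "\<dots> \<le> (\<Sum>j\<in>UNIV. B $ k $ j * (ratio k * x $ j))"
    using B_nonneg v_le by (intro sum_mono mult_left_mono) auto
  also have "\<dots> = ratio k * (B *v x) $ k"
    by (simp add: matrix_vector_mult_def sum_distrib_left algebra_simps)
  also have "\<dots> < ratio k * (s * x $ k)"
    using Bx ratio_pos by simp
  also have "\<dots> = s * cmod (v $ k)"
    unfolding ratio_def using x_pos[of k] by simp
  finally show ?thesis using vk_pos by simp
qed

(* Otherwise z = y + c v, with c the least constant making z nonnegative, vanishes at some m,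
   and there 0 \<le> (B z) m < t z m = 0. *)
lemma strict_subeigenvector_imp_nonneg:
  fixes B :: "real^'n^'n"
  assumes B_nonneg: "\<forall>i j. 0 \<le> B $ i $ j" and v: "strict_subeigenvector B t v"
    and y: "\<forall>i. (B *v y) $ i \<le> t * y $ i"
  shows "0 \<le> y $ i"
proof (rule ccontr)
  assume "\<not> 0 \<le> y $ i"
  have v_pos: "0 < v $ j" and Bv: "(B *v v) $ j < t * v $ j" for j
    using v unfolding strict_subeigenvector_def by auto
  define deficit where "deficit j = - y $ j / v $ j" for j
  obtain m where deficit_le: "deficit j \<le> deficit m" for j
    using finite_UNIV_has_argmax[of deficit] by blast
  have "0 < deficit i"
    unfolding deficit_def using \<open>\<not> 0 \<le> y $ i\<close> v_pos[of i] by (simp add: divide_neg_pos)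
  then have c_pos: "0 < deficit m" using deficit_le[of i] by linarith
  define z where "z = y + deficit m *\<^sub>R v"
  have "0 \<le> z $ j" for j
    using deficit_le[of j] v_pos[of j] unfolding deficit_def[of j]
    by (simp add: z_def field_simps)
  then have "0 \<le> (B *v z) $ m"
    using B_nonneg by (intro nonneg_matrix_vector_mult_nonneg) auto
  moreover have "z $ m = 0"
    using v_pos[of m] by (simp add: z_def deficit_def)
  moreover have "(B *v z) $ m < t * z $ m"
  proof -
    have "(B *v z) $ m = (B *v y) $ m + deficit m * (B *v v) $ m"
      by (simp add: z_def matrix_vector_right_distrib matrix_vector_mult_scaleR)
    also have "\<dots> < t * y $ m + deficit m * (t * v $ m)"
      using y Bv c_pos by (intro add_le_less_mono) auto
    also have "\<dots> = t * z $ m" by (simp add: z_def algebra_simps)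
    finally show ?thesis .
  qed
  ultimately show False by simp
qed

(* The solution u of (T I - B) u = 1 satisfies B u \<le> (T + \<epsilon>) u for small \<epsilon>, so it is
   nonnegative, and then (T I - B) u = 1 forces u > 0. *)
lemma strict_subeigenvector_at_Inf:
  fixes B :: "real^'n^'n"
  assumes B_nonneg: "\<forall>i j. 0 \<le> B $ i $ j" and inv: "invertible (T *\<^sub>R mat 1 - B)"
    and above: "\<And>t. T < t \<Longrightarrow> \<exists>v. strict_subeigenvector B t v"
  shows "\<exists>u. strict_subeigenvector B T u"
proof -
  obtain R where "(T *\<^sub>R mat 1 - B) ** R = mat 1"
    using inv unfolding invertible_def by blast
  then have "(T *\<^sub>R mat 1 - B) *v (R *v 1) = 1"
    by (simp add: matrix_vector_mul_assoc matrix_vector_mul_lid)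
  then obtain u where "(T *\<^sub>R mat 1 - B) *v u = 1" by blast
  then have "(T *\<^sub>R u - B *v u) $ i = 1" for i
    by (simp add: matrix_vector_mult_shift)
  then have Bu: "(B *v u) $ i = T * u $ i - 1" for i
    by (simp add: algebra_simps)
  define \<epsilon> where "\<epsilon> = 1 / (1 + norm u)"
  have \<epsilon>_pos: "0 < \<epsilon>" unfolding \<epsilon>_def by (simp add: add_pos_nonneg)
  have "(B *v u) $ i \<le> (T + \<epsilon>) * u $ i" for i
  proof -
    have "\<bar>u $ i\<bar> \<le> norm u" by (rule component_le_norm_cart)
    then have "\<epsilon> * \<bar>u $ i\<bar> \<le> 1"
      unfolding \<epsilon>_def by (simp add: divide_le_eq add_pos_nonneg)
    then have "\<bar>\<epsilon> * u $ i\<bar> \<le> 1"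
      using \<epsilon>_pos by (simp add: abs_mult)
    then show ?thesis by (simp add: Bu algebra_simps abs_le_iff)
  qed
  moreover obtain v where "strict_subeigenvector B (T + \<epsilon>) v"
    using above \<epsilon>_pos by fastforce
  ultimately have u_nonneg: "0 \<le> u $ i" for i
    using B_nonneg strict_subeigenvector_imp_nonneg by blast
  have "0 < u $ i" for i
  proof -
    have "0 \<le> (B *v u) $ i"
      using B_nonneg u_nonneg by (intro nonneg_matrix_vector_mult_nonneg) auto
    then have "1 \<le> T * u $ i" by (simp add: Bu)
    then show ?thesis using u_nonneg[of i] by (cases "u $ i = 0") auto
  qed
  then show ?thesis
    unfolding strict_subeigenvector_def by (intro exI[of _ u]) (simp add: Bu)
qed

(* T is the infimum of all t admitting a strict subeigenvector. If T \<ge> s, then T I - B would be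
   invertible, so T itself and hence some t < T would admit one. *)
lemma ex_strict_subeigenvector_nonsingular_shift:
  fixes B :: "real^'n^'n"
  assumes B_nonneg: "\<forall>i j. 0 \<le> B $ i $ j" and "spec_rad B \<le> s"
    and inv: "invertible (s *\<^sub>R mat 1 - B)"
  shows "\<exists>v. strict_subeigenvector B s v"
proof -
  define T where "T = Inf {t. \<exists>v. strict_subeigenvector B t v}"
  have bdd: "bdd_below {t. \<exists>v. strict_subeigenvector B t v}"
    using strict_subeigenvector_pos[OF B_nonneg]
    by (intro bdd_belowI[of _ 0]) (auto intro: less_imp_le)
  have above: "\<exists>v. strict_subeigenvector B t v" if T_less: "T < t" for t
  proof -
    obtain t' v where "t' < t" "strict_subeigenvector B t' v"
      using cInf_lessD[OF _ T_less[unfolded T_def]] ex_strict_subeigenvector by blast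
    then show ?thesis using strict_subeigenvector_mono less_imp_le by blast
  qed
  have "T < s"
  proof (rule ccontr)
    assume "\<not> T < s"
    have "invertible (T *\<^sub>R mat 1 - B)"
    proof (cases "T = s")
      case False
      with \<open>\<not> T < s\<close> have "s < T" by simp
      show ?thesis unfolding invertible_shift_iff
      proof (intro allI impI, rule ccontr)
        fix w assume "B *v w = T *\<^sub>R w" "w \<noteq> 0"
        then have "complex_of_real T \<in> eigenvalues (cmatrix B)"
          by (intro of_real_in_eigenvalues_cmatrix)
        then have "cmod (complex_of_real T) \<le> s"
          using \<open>spec_rad B \<le> s\<close> unfolding spec_rad_le_iff by blast
        with \<open>s < T\<close> show False by simp
      qed
    qed (use inv in simp)
    then obtain v where "strict_subeigenvector B T v"
      using strict_subeigenvector_at_Inf[OF B_nonneg] above by blast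
    then obtain t where "t < T" "strict_subeigenvector B t v"
      by (rule strict_subeigenvector_decrease)
    moreover have "T \<le> t" unfolding T_def using bdd \<open>strict_subeigenvector B t v\<close>
      by (intro cInf_lower) auto
    ultimately show False by simp
  qed
  then show ?thesis by (rule above)
qed

section \<open>Nonsingular M-matrices\<close>

lemma Z_matrix_eq_shift_minus_nonneg:
  fixes A :: "real^'n^'n"
  assumes "Z_matrix A"
  obtains s B where "\<forall>i j. 0 \<le> B $ i $ j" "A = s *\<^sub>R mat 1 - B"
proof
  define s where "s = (\<Sum>i\<in>UNIV. \<bar>A $ i $ i\<bar>)"
  show "A = s *\<^sub>R mat 1 - (s *\<^sub>R mat 1 - A)" by simp
  have "\<bar>A $ i $ i\<bar> \<le> s" for i unfolding s_def by (rule member_le_sum) auto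
  then show "\<forall>i j. 0 \<le> (s *\<^sub>R mat 1 - A) $ i $ j"
    using assms unfolding Z_matrix_def by (auto simp: Finite_Cartesian_Product.mat_def abs_le_iff)
qed

lemma nonsingular_M_matrix_iff_semipositive:
  fixes A :: "real^'n^'n"
  assumes "Z_matrix A"
  shows "nonsingular_M_matrix A \<longleftrightarrow> (\<exists>v. (\<forall>i. 0 < v $ i) \<and> (\<forall>i. 0 < (A *v v) $ i))"
proof
  assume "nonsingular_M_matrix A"
  then obtain s B where "\<forall>i j. 0 \<le> B $ i $ j" "A = s *\<^sub>R mat 1 - B" "spec_rad B \<le> s"
    "invertible A"
    unfolding nonsingular_M_matrix_def M_matrix_def by blast
  then obtain v where "strict_subeigenvector B s v"
    using ex_strict_subeigenvector_nonsingular_shift by blast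
  then show "\<exists>v. (\<forall>i. 0 < v $ i) \<and> (\<forall>i. 0 < (A *v v) $ i)"
    unfolding strict_subeigenvector_def \<open>A = _\<close> matrix_vector_mult_shift by auto
next
  assume "\<exists>v. (\<forall>i. 0 < v $ i) \<and> (\<forall>i. 0 < (A *v v) $ i)"
  then obtain v where v: "\<forall>i. 0 < v $ i" "\<forall>i. 0 < (A *v v) $ i" by blast
  obtain s B where B_nonneg: "\<forall>i j. 0 \<le> B $ i $ j" and A: "A = s *\<^sub>R mat 1 - B"
    using Z_matrix_eq_shift_minus_nonneg[OF assms] .
  have sub: "strict_subeigenvector B s v"
    using v unfolding strict_subeigenvector_def A matrix_vector_mult_shift by simp
  have eig_less: "cmod l < s" if "l \<in> eigenvalues (cmatrix B)" for l
    using cmod_eigenvalue_less[OF B_nonneg sub that] .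
  have "spec_rad B \<le> s"
    using eig_less by (simp add: spec_rad_le_iff less_imp_le)
  moreover have "invertible A"
    unfolding A invertible_shift_iff
    using eig_less of_real_in_eigenvalues_cmatrix by fastforce
  ultimately show "nonsingular_M_matrix A"
    unfolding nonsingular_M_matrix_def M_matrix_def using assms B_nonneg A by blast
qed

section \<open>Sub- and supersolutions for Z-matrices\<close>

definition vec_upd :: "'a^'n \<Rightarrow> 'n \<Rightarrow> 'a \<Rightarrow> 'a^'n" where
  "vec_upd x i t = (\<chi> j. if j = i then t else x $ j)"

lemma vec_upd_nth [simp]: "vec_upd x i t $ j = (if j = i then t else x $ j)"
  by (simp add: vec_upd_def)

lemma vec_upd_same [simp]: "vec_upd x i (x $ i) = x"
  by (simp add: Finite_Cartesian_Product.vec_eq_iff)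

lemma matrix_vector_mult_vec_upd:
  fixes A :: "'a::comm_ring_1^'n^'n"
  shows "(A *v vec_upd x i t) $ i = (A *v x) $ i + A $ i $ i * (t - x $ i)"
proof -
  have "(A *v vec_upd x i t) $ i - (A *v x) $ i = (\<Sum>j\<in>UNIV. A $ i $ j * (vec_upd x i t $ j - x $ j))"
    by (simp add: matrix_vector_mult_def sum_subtractf algebra_simps)
  also have "\<dots> = (\<Sum>j\<in>UNIV. if j = i then A $ i $ i * (t - x $ i) else 0)"
    by (intro sum.cong) auto
  also have "\<dots> = A $ i $ i * (t - x $ i)"
    by simp
  finally show ?thesis by (simp add: algebra_simps)
qed

lemma isCont_residual_vec_upd:
  fixes A :: "real^'n^'n"
  assumes "isCont f t"
  shows "isCont (\<lambda>\<tau>. (A *v vec_upd x i \<tau>) $ i - f \<tau>) t"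
  unfolding matrix_vector_mult_vec_upd using assms by (intro continuous_intros)

lemma Z_matrix_row_antimono:
  fixes A :: "real^'n^'n"
  assumes "Z_matrix A" "x \<le> y" "x $ i = y $ i"
  shows "(A *v y) $ i \<le> (A *v x) $ i"
proof -
  have "A $ i $ j * (y $ j - x $ j) \<le> 0" for j
    using assms unfolding Z_matrix_def Finite_Cartesian_Product.less_eq_vec_def
    by (cases "j = i") (auto simp: mult_nonpos_nonneg)
  then have "(\<Sum>j\<in>UNIV. A $ i $ j * (y $ j - x $ j)) \<le> 0"
    by (rule sum_nonpos)
  then show ?thesis
    by (simp add: matrix_vector_mult_def sum_subtractf algebra_simps)
qed

(* For a Z-matrix, lowering coordinates other than i can only increase row i, so the claim
   reduces to continuity in the i-th coordinate. *)
lemma Inf_supersolutions_supersolution: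
  fixes A :: "real^'n^'n" and S :: "(real^'n) set" and f :: "real \<Rightarrow> real"
  assumes Z: "Z_matrix A" and cont: "\<And>t. 0 < t \<Longrightarrow> isCont f t"
    and "S \<noteq> {}" and lo_pos: "\<forall>i. 0 < lo $ i" and lo: "\<And>x. x \<in> S \<Longrightarrow> lo \<le> x"
    and super: "\<And>x i. x \<in> S \<Longrightarrow> f (x $ i) \<le> (A *v x) $ i"
  shows "f (Inf S $ i) \<le> (A *v Inf S) $ i"
proof (rule ccontr)
  define a where "a = Inf S $ i"
  define residual where "residual \<tau> = (A *v vec_upd (Inf S) i \<tau>) $ i - f \<tau>" for \<tau>
  have bdd: "bdd_below S" using lo by (rule bdd_belowI)
  have "lo \<le> Inf S" using \<open>S \<noteq> {}\<close> lo by (rule cInf_greatest)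
  then have "0 < a"
    using lo_pos unfolding a_def Finite_Cartesian_Product.less_eq_vec_def by (meson less_le_trans)
  assume "\<not> f (Inf S $ i) \<le> (A *v Inf S) $ i"
  then have "residual a < 0" by (simp add: residual_def a_def)
  moreover have "isCont residual a"
    unfolding residual_def by (intro isCont_residual_vec_upd cont \<open>0 < a\<close>)
  ultimately obtain r where "0 < r"
    and r': "\<And>\<tau>. \<tau> \<noteq> a \<Longrightarrow> \<bar>a - \<tau>\<bar> < r \<Longrightarrow> residual \<tau> < 0"
    using LIM_fun_less_zero[of residual "residual a" a] unfolding isCont_def by blast
  have r: "residual \<tau> < 0" if "\<bar>a - \<tau>\<bar> < r" for \<tau>
    using r'[OF _ that] \<open>residual a < 0\<close> by (cases "\<tau> = a") auto
  have "Inf ((\<lambda>x. x $ i) ` S) < a + r"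
    using \<open>0 < r\<close> by (simp add: a_def Inf_vec_def)
  then obtain x where "x \<in> S" "x $ i < a + r"
    using cInf_lessD[of "(\<lambda>x. x $ i) ` S"] \<open>S \<noteq> {}\<close> by blast
  moreover have "Inf S \<le> x" using \<open>x \<in> S\<close> bdd by (rule cInf_lower)
  ultimately have "residual (x $ i) < 0"
    by (intro r) (auto simp: a_def Finite_Cartesian_Product.less_eq_vec_def)
  moreover have "(A *v x) $ i \<le> (A *v vec_upd (Inf S) i (x $ i)) $ i"
    using \<open>Inf S \<le> x\<close>
    by (intro Z_matrix_row_antimono[OF Z]) (auto simp: Finite_Cartesian_Product.less_eq_vec_def)
  ultimately show False
    using super[OF \<open>x \<in> S\<close>, of i] by (simp add: residual_def)
qed

(* If row i were strict, lowering the i-th coordinate a little would give a smaller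
   supersolution. *)
lemma minimal_supersolution_solution:
  fixes A :: "real^'n^'n" and f :: "real \<Rightarrow> real"
  assumes Z: "Z_matrix A" and cont: "\<And>t. 0 < t \<Longrightarrow> isCont f t"
    and lo_pos: "\<forall>i. 0 < lo $ i" and sub: "\<forall>i. (A *v lo) $ i \<le> f (lo $ i)"
    and "lo \<le> x" and super: "\<forall>i. f (x $ i) \<le> (A *v x) $ i"
    and minimal:
      "\<And>y. lo \<le> y \<Longrightarrow> y \<le> x \<Longrightarrow> \<forall>i. f (y $ i) \<le> (A *v y) $ i \<Longrightarrow> x \<le> y"
  shows "(A *v x) $ i = f (x $ i)"
proof (rule ccontr)
  assume "(A *v x) $ i \<noteq> f (x $ i)"
  with super have gt: "f (x $ i) < (A *v x) $ i" by (simp add: order_less_le)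
  have lo_le: "lo $ j \<le> x $ j" for j
    using \<open>lo \<le> x\<close> by (simp add: Finite_Cartesian_Product.less_eq_vec_def)
  have "lo $ i < x $ i"
  proof (rule ccontr)
    assume "\<not> lo $ i < x $ i"
    with lo_le[of i] have "lo $ i = x $ i" by simp
    then have "(A *v x) $ i \<le> (A *v lo) $ i"
      using Z_matrix_row_antimono[OF Z \<open>lo \<le> x\<close>] by simp
    with sub gt \<open>lo $ i = x $ i\<close> show False by (metis not_le order_trans)
  qed
  define residual where "residual \<tau> = (A *v vec_upd x i \<tau>) $ i - f \<tau>" for \<tau>
  have "0 < residual (x $ i)" using gt by (simp add: residual_def)
  moreover have "isCont residual (x $ i)"
    unfolding residual_def using lo_pos \<open>lo $ i < x $ i\<close>
    by (intro isCont_residual_vec_upd cont) (meson less_trans)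
  ultimately obtain r where "0 < r"
    and r: "\<And>\<tau>. \<tau> \<noteq> x $ i \<Longrightarrow> \<bar>x $ i - \<tau>\<bar> < r \<Longrightarrow> 0 < residual \<tau>"
    using LIM_fun_gt_zero[of residual "residual (x $ i)" "x $ i"] unfolding isCont_def by blast
  define \<tau> where "\<tau> = max (lo $ i) (x $ i - r / 2)"
  define y where "y = vec_upd x i \<tau>"
  have "\<tau> < x $ i" "lo $ i \<le> \<tau>"
    using \<open>0 < r\<close> \<open>lo $ i < x $ i\<close> by (auto simp: \<tau>_def)
  then have "lo \<le> y" "y \<le> x"
    using lo_le by (auto simp: y_def Finite_Cartesian_Product.less_eq_vec_def)
  moreover have "f (y $ j) \<le> (A *v y) $ j" for j
  proof (cases "j = i")
    case True
    have "0 < residual \<tau>"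
      using \<open>0 < r\<close> \<open>\<tau> < x $ i\<close> by (intro r) (auto simp: \<tau>_def)
    then show ?thesis using True by (simp add: residual_def y_def)
  next
    case False
    then have "(A *v x) $ j \<le> (A *v y) $ j"
      using \<open>y \<le> x\<close> by (intro Z_matrix_row_antimono[OF Z]) (simp_all add: y_def)
    then show ?thesis using super False by (metis order_trans vec_upd_nth y_def)
  qed
  ultimately have "x \<le> y" using minimal by blast
  then show False
    using \<open>\<tau> < x $ i\<close> by (auto simp: y_def Finite_Cartesian_Product.less_eq_vec_def dest: spec[of _ i])
qed

lemma Z_matrix_solution_between:
  fixes A :: "real^'n^'n" and f :: "real \<Rightarrow> real"
  assumes Z: "Z_matrix A" and cont: "\<And>t. 0 < t \<Longrightarrow> isCont f t"
    and lo_pos: "\<forall>i. 0 < lo $ i" and "lo \<le> hi"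
    and sub: "\<forall>i. (A *v lo) $ i \<le> f (lo $ i)" and super: "\<forall>i. f (hi $ i) \<le> (A *v hi) $ i"
  shows "\<exists>x. lo \<le> x \<and> x \<le> hi \<and> (\<forall>i. (A *v x) $ i = f (x $ i))"
proof -
  define S where "S = {x. lo \<le> x \<and> x \<le> hi \<and> (\<forall>i. f (x $ i) \<le> (A *v x) $ i)}"
  have "hi \<in> S" using \<open>lo \<le> hi\<close> super by (simp add: S_def)
  then have "S \<noteq> {}" by blast
  have bdd: "bdd_below S" by (rule bdd_belowI[of _ lo]) (simp add: S_def)
  have "lo \<le> Inf S" using \<open>S \<noteq> {}\<close> by (rule cInf_greatest) (simp add: S_def)
  moreover have "Inf S \<le> hi" using \<open>hi \<in> S\<close> bdd by (rule cInf_lower)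
  moreover have super_Inf: "\<forall>i. f (Inf S $ i) \<le> (A *v Inf S) $ i"
    by (intro allI Inf_supersolutions_supersolution[OF Z cont \<open>S \<noteq> {}\<close> lo_pos])
      (auto simp: S_def)
  moreover have "(A *v Inf S) $ i = f (Inf S $ i)" for i
  proof (rule minimal_supersolution_solution[OF Z cont lo_pos sub \<open>lo \<le> Inf S\<close> super_Inf])
    fix y assume "lo \<le> y" "y \<le> Inf S" "\<forall>i. f (y $ i) \<le> (A *v y) $ i"
    then have "y \<in> S" using \<open>Inf S \<le> hi\<close> by (auto simp: S_def)
    then show "Inf S \<le> y" using bdd by (rule cInf_lower)
  qed
  ultimately show ?thesis by blast
qed

section \<open>The equation A x = x powr p\<close>

lemma mult_le_powr_mult_iff:
  fixes c w u p :: real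
  assumes "0 < c"
  shows "c * w \<le> c powr p * u \<longleftrightarrow> c powr (1 - p) * w \<le> u"
    and "c powr p * u \<le> c * w \<longleftrightarrow> u \<le> c powr (1 - p) * w"
proof -
  have "c powr p * c powr (1 - p) = c"
    using assms by (simp flip: powr_add)
  then have split: "c * w = c powr p * (c powr (1 - p) * w)"
    by (simp add: mult.assoc [symmetric])
  show "c * w \<le> c powr p * u \<longleftrightarrow> c powr (1 - p) * w \<le> u"
    and "c powr p * u \<le> c * w \<longleftrightarrow> u \<le> c powr (1 - p) * w"
    unfolding split using assms by (simp_all add: mult_le_cancel_left_pos)
qed

lemma scaled_sub_super_solutions:
  fixes A :: "real^'n^'n" and v :: "real^'n"
  assumes "p < 1" and v_pos: "\<forall>i. 0 < v $ i" and Av_pos: "\<forall>i. 0 < (A *v v) $ i"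
  obtains r t where "0 < r" "r \<le> t"
    "\<forall>i. (A *v r *\<^sub>R v) $ i \<le> (r *\<^sub>R v) $ i powr p"
    "\<forall>i. (t *\<^sub>R v) $ i powr p \<le> (A *v t *\<^sub>R v) $ i"
proof
  define ratio where "ratio i = v $ i powr p / (A *v v) $ i" for i
  have ratio_pos: "0 < ratio i" for i
    using v_pos[rule_format, of i] Av_pos[rule_format, of i] by (simp add: ratio_def)
  define root where "root c = c powr (1 / (1 - p))" for c :: real
  have root: "0 < root c" "root c powr (1 - p) = c" if "0 < c" for c
    using that \<open>p < 1\<close> by (simp_all add: root_def powr_powr)
  define r where "r = root (Min (range ratio))"
  define t where "t = root (Max (range ratio))"
  have Min_pos: "0 < Min (range ratio)" and Max_pos: "0 < Max (range ratio)"
    using ratio_pos by (simp_all add: Max_gr_iff)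
  have r: "0 < r" "r powr (1 - p) = Min (range ratio)"
    using root Min_pos by (simp_all add: r_def)
  have t: "t powr (1 - p) = Max (range ratio)"
    using root Max_pos by (simp_all add: t_def)
  have scaled: "(A *v c *\<^sub>R v) $ i = c * (A *v v) $ i" "(c * v $ i) powr p = c powr p * v $ i powr p"
    if "0 < c" for c i
    using that v_pos by (simp_all add: matrix_vector_mult_scaleR powr_mult less_imp_le)
  show "0 < r" by (rule r(1))
  show "r \<le> t"
    unfolding r_def t_def root_def using Min_pos \<open>p < 1\<close>
    by (intro powr_mono2) (auto intro: order.trans[OF Min_le Max_ge] less_imp_le)
  then have "0 < t" using \<open>0 < r\<close> by simp
  show "\<forall>i. (A *v r *\<^sub>R v) $ i \<le> (r *\<^sub>R v) $ i powr p"
  proof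
    fix i
    have "Min (range ratio) * (A *v v) $ i \<le> ratio i * (A *v v) $ i"
      using Av_pos by (intro mult_right_mono) (simp_all add: less_imp_le)
    also have "\<dots> = v $ i powr p"
      using Av_pos[rule_format, of i] by (simp add: ratio_def)
    finally show "(A *v r *\<^sub>R v) $ i \<le> (r *\<^sub>R v) $ i powr p"
      using r by (simp add: scaled mult_le_powr_mult_iff)
  qed
  show "\<forall>i. (t *\<^sub>R v) $ i powr p \<le> (A *v t *\<^sub>R v) $ i"
  proof
    fix i
    have "v $ i powr p = ratio i * (A *v v) $ i"
      using Av_pos[rule_format, of i] by (simp add: ratio_def)
    also have "\<dots> \<le> Max (range ratio) * (A *v v) $ i"
      using Av_pos by (intro mult_right_mono) (simp_all add: less_imp_le)
    finally show "(t *\<^sub>R v) $ i powr p \<le> (A *v t *\<^sub>R v) $ i"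
      using t \<open>0 < t\<close> by (simp add: scaled mult_le_powr_mult_iff)
  qed
qed

lemma solution_exists_if_semipositive:
  fixes A :: "real^'n^'n" and v :: "real^'n"
  assumes Z: "Z_matrix A" and "p < 1" and v_pos: "\<forall>i. 0 < v $ i"
    and Av_pos: "\<forall>i. 0 < (A *v v) $ i"
  shows "\<exists>x. (\<forall>i. 0 < x $ i) \<and> A *v x = vpowr x p"
proof -
  obtain r t where "0 < r" "r \<le> t"
    and sub: "\<forall>i. (A *v r *\<^sub>R v) $ i \<le> (r *\<^sub>R v) $ i powr p"
    and super: "\<forall>i. (t *\<^sub>R v) $ i powr p \<le> (A *v t *\<^sub>R v) $ i"
    using scaled_sub_super_solutions[OF \<open>p < 1\<close> v_pos Av_pos] by blast
  have "\<exists>x. r *\<^sub>R v \<le> x \<and> x \<le> t *\<^sub>R v \<and> (\<forall>i. (A *v x) $ i = x $ i powr p)"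
  proof (rule Z_matrix_solution_between[OF Z _ _ _ sub super])
    show "isCont (\<lambda>\<tau>. \<tau> powr p) \<tau>" if "0 < \<tau>" for \<tau>
      using that by (intro continuous_intros) simp
    show "\<forall>i. 0 < (r *\<^sub>R v) $ i" using \<open>0 < r\<close> v_pos by simp
    show "r *\<^sub>R v \<le> t *\<^sub>R v"
      using \<open>r \<le> t\<close> v_pos
      by (simp add: Finite_Cartesian_Product.less_eq_vec_def mult_right_mono less_imp_le)
  qed
  then obtain x where "r *\<^sub>R v \<le> x" and sol: "\<forall>i. (A *v x) $ i = x $ i powr p"
    by blast
  have "0 < x $ i" for i
  proof -
    have "0 < r * v $ i" using \<open>0 < r\<close> v_pos by simp
    also have "\<dots> \<le> x $ i"
      using \<open>r *\<^sub>R v \<le> x\<close> by (simp add: Finite_Cartesian_Product.less_eq_vec_def)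
    finally show ?thesis .
  qed
  moreover have "A *v x = vpowr x p"
    using sol by (simp add: vpowr_def Finite_Cartesian_Product.vec_eq_iff)
  ultimately show ?thesis by blast
qed

theorem theorem3p4:
  fixes A :: "real^'n^'n::finite" and p :: real
  assumes "Z_matrix A" and "p < 1"
  shows "(\<exists>x::real^'n. (\<forall>i. x $ i > 0) \<and> A *v x = vpowr x p) \<longleftrightarrow> nonsingular_M_matrix A"
proof
  assume "\<exists>x::real^'n. (\<forall>i. x $ i > 0) \<and> A *v x = vpowr x p"
  then obtain x :: "real^'n" where x_pos: "\<forall>i. 0 < x $ i" and "A *v x = vpowr x p"
    by blast
  then have "0 < (A *v x) $ i" for i
    using x_pos by (simp add: vpowr_def less_imp_neq[THEN not_sym])
  with x_pos show "nonsingular_M_matrix A"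
    using nonsingular_M_matrix_iff_semipositive[OF assms(1)] by blast
next
  assume "nonsingular_M_matrix A"
  then obtain v where "\<forall>i. 0 < v $ i" and "\<forall>i. 0 < (A *v v) $ i"
    using nonsingular_M_matrix_iff_semipositive[OF assms(1)] by blast
  then show "\<exists>x::real^'n. (\<forall>i. x $ i > 0) \<and> A *v x = vpowr x p"
    by (rule solution_exists_if_semipositive[OF assms])
qed

end
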